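(* Let $\Gamma$ be a Deza graph with parameters $(n,k,k-1,a)$, $k>1$, $\beta=1$. For an $NA$-vertex $x$, the vertex $(x')_b$ is not adjacent to $x$.
   Context: A Deza graph with parameters $(n,k,b,a)$, $a\le b$, is a $k$-regular graph on $n$ vertices in which any two distinct vertices have $a$ or $b$ common neighbours; $\beta$ is the number of vertices $u\ne v$ with exactly $b$ common neighbours with a given vertex $v$. Since $\beta=1$, for each vertex $x$ let $x_b$ denote the unique vertex having $b=k-1$ common neighbours with $x$. A vertex $x$ is an $A$-vertex if $x$ is adjacent to $x_b$, and an $NA$-vertex otherwise. For an $NA$-vertex $x$, $x'$ denotes the unique neighbour of $x$ not adjacent to $x_b$. *)

theory Defs
  imports Main
begin

definition nbrs :: "'a set \<Rightarrow> ('a \<Rightarrow> 'a \<Rightarrow> bool) \<Rightarrow> 'a \<Rightarrow> 'a set" where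
  "nbrs V E v = {w \<in> V. E v w}"

definition common_nbrs :: "'a set \<Rightarrow> ('a \<Rightarrow> 'a \<Rightarrow> bool) \<Rightarrow> 'a \<Rightarrow> 'a \<Rightarrow> nat" where
  "common_nbrs V E u v = card {w \<in> V. E u w \<and> E v w}"

definition deza_graph :: "'a set \<Rightarrow> ('a \<Rightarrow> 'a \<Rightarrow> bool) \<Rightarrow> nat \<Rightarrow> nat \<Rightarrow> nat \<Rightarrow> nat \<Rightarrow> bool" where
  "deza_graph V E n k b a \<longleftrightarrow>
     finite V \<and> card V = n \<and>
     (\<forall>u v. E u v \<longrightarrow> u \<in> V \<and> v \<in> V) \<and>
     (\<forall>u v. E u v \<longrightarrow> E v u) \<and> (\<forall>v. \<not> E v v) \<and>
     (\<forall>v\<in>V. card (nbrs V E v) = k) \<and>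
     a \<le> b \<and>
     (\<forall>u\<in>V. \<forall>v\<in>V. u \<noteq> v \<longrightarrow> common_nbrs V E u v = a \<or> common_nbrs V E u v = b)"

definition beta_num :: "'a set \<Rightarrow> ('a \<Rightarrow> 'a \<Rightarrow> bool) \<Rightarrow> nat \<Rightarrow> 'a \<Rightarrow> nat" where
  "beta_num V E b v = card {u \<in> V. u \<noteq> v \<and> common_nbrs V E u v = b}"

text \<open>x_b: the unique vertex having b common neighbours with x (when beta = 1).\<close>
definition vb :: "'a set \<Rightarrow> ('a \<Rightarrow> 'a \<Rightarrow> bool) \<Rightarrow> nat \<Rightarrow> 'a \<Rightarrow> 'a" where
  "vb V E b x = (THE y. y \<in> V \<and> y \<noteq> x \<and> common_nbrs V E x y = b)"

definition A_vertex :: "'a set \<Rightarrow> ('a \<Rightarrow> 'a \<Rightarrow> bool) \<Rightarrow> nat \<Rightarrow> 'a \<Rightarrow> bool" where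
  "A_vertex V E b x \<longleftrightarrow> x \<in> V \<and> E x (vb V E b x)"

definition NA_vertex :: "'a set \<Rightarrow> ('a \<Rightarrow> 'a \<Rightarrow> bool) \<Rightarrow> nat \<Rightarrow> 'a \<Rightarrow> bool" where
  "NA_vertex V E b x \<longleftrightarrow> x \<in> V \<and> \<not> E x (vb V E b x)"

text \<open>x': the unique neighbour of the NA-vertex x not adjacent to x_b.\<close>
definition vprime :: "'a set \<Rightarrow> ('a \<Rightarrow> 'a \<Rightarrow> bool) \<Rightarrow> nat \<Rightarrow> 'a \<Rightarrow> 'a" where
  "vprime V E b x = (THE y. y \<in> V \<and> E x y \<and> \<not> E y (vb V E b x))"

end

theory Submission
  imports Defs
begin

text \<open>Let y = x_b. Since x and y share k - 1 neighbours, N(x) = C \<union> {x'} and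
N(y) = C \<union> {y'} with C = N(x) \<inter> N(y). Every vertex v other than x and y has a
common neighbours with both x and y (their b-partners are each other), so v is adjacent
to x' exactly when it is adjacent to y'. Hence all neighbours of x' except x are
neighbours of y', so x' and y' share k - 1 neighbours, i.e. (x')_b = y', which is
not adjacent to x.\<close>

lemma common_nbrs_eq_card_nbrs_Int:
  "common_nbrs V E u v = card (nbrs V E u \<inter> nbrs V E v)"
  unfolding common_nbrs_def nbrs_def by (rule arg_cong[where f = card]) blast

lemma common_nbrs_commute: "common_nbrs V E u v = common_nbrs V E v u"
  unfolding common_nbrs_def by (simp only: conj_commute)

lemma beta_num_eq_1_ex1:
  assumes "beta_num V E b v = 1"
  shows "\<exists>!u. u \<in> V \<and> u \<noteq> v \<and> common_nbrs V E v u = b"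
proof -
  have "common_nbrs V E u v = common_nbrs V E v u" for u
    by (rule common_nbrs_commute)
  then have "card {u \<in> V. u \<noteq> v \<and> common_nbrs V E v u = b} = 1"
    using assms unfolding beta_num_def by simp
  then show ?thesis
    by (simp add: card_eq_Suc_0_iff_is_singleton is_singleton_iff_ex1)
qed

lemma vb_spec:
  assumes "beta_num V E b v = 1"
  shows "vb V E b v \<in> V" and "vb V E b v \<noteq> v" and "common_nbrs V E v (vb V E b v) = b"
  using theI'[OF beta_num_eq_1_ex1[OF assms]] unfolding vb_def by auto

lemma vb_eqI:
  assumes "beta_num V E b v = 1" and "u \<in> V" and "u \<noteq> v" and "common_nbrs V E v u = b"
  shows "vb V E b v = u"
  unfolding vb_def
  by (rule the1_equality[OF beta_num_eq_1_ex1[OF assms(1)]]) (simp add: assms(2-4))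

lemma vprime_eqI:
  assumes "\<And>u v. E u v \<Longrightarrow> E v u"
    and "nbrs V E x - nbrs V E (vb V E b x) = {u}"
  shows "vprime V E b x = u"
proof -
  have "y \<in> V \<and> E x y \<and> \<not> E y (vb V E b x) \<longleftrightarrow> y = u" for y
    using assms unfolding nbrs_def set_eq_iff by blast
  then show ?thesis
    unfolding vprime_def by simp
qed

lemma card_insert_Int_if:
  "finite C \<Longrightarrow> p \<notin> C \<Longrightarrow> card (insert p C \<inter> A) = card (C \<inter> A) + (if p \<in> A then 1 else 0)"
  by (simp add: Int_insert_left)

locale deza_beta_one =
  fixes V :: "'a set" and E :: "'a \<Rightarrow> 'a \<Rightarrow> bool" and n k a :: nat
  assumes deza: "deza_graph V E n k (k - 1) a"
    and k_gt_1: "k > 1"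
    and beta_one: "\<forall>v\<in>V. beta_num V E (k - 1) v = 1"
begin

abbreviation N :: "'a \<Rightarrow> 'a set" where "N \<equiv> nbrs V E"
abbreviation mate :: "'a \<Rightarrow> 'a" where "mate \<equiv> vb V E (k - 1)"
abbreviation primed :: "'a \<Rightarrow> 'a" where "primed \<equiv> vprime V E (k - 1)"

lemma finite_V: "finite V"
  and edge_in_V: "E u v \<Longrightarrow> u \<in> V \<and> v \<in> V"
  and edge_sym: "E u v \<Longrightarrow> E v u"
  and card_nbrs: "v \<in> V \<Longrightarrow> card (N v) = k"
  and common_nbrs_a_or_b: "\<lbrakk>u \<in> V; v \<in> V; u \<noteq> v\<rbrakk> \<Longrightarrow>
         common_nbrs V E u v = a \<or> common_nbrs V E u v = k - 1"
  using deza unfolding deza_graph_def by auto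

lemma finite_nbrs: "finite (N v)"
  using finite_V unfolding nbrs_def by simp

lemma mem_nbrs_iff: "w \<in> N v \<longleftrightarrow> E v w"
  using edge_in_V unfolding nbrs_def by auto

lemma
  assumes "v \<in> V"
  shows mate_in_V: "mate v \<in> V"
    and mate_neq: "mate v \<noteq> v"
    and card_nbrs_Int_mate: "card (N v \<inter> N (mate v)) = k - 1"
  using vb_spec[of V E "k - 1" v] beta_one assms
  by (simp_all add: common_nbrs_eq_card_nbrs_Int)

lemma mate_eqI:
  assumes "v \<in> V" "u \<in> V" "u \<noteq> v" "card (N v \<inter> N u) = k - 1"
  shows "mate v = u"
  using vb_eqI[of V E "k - 1" v u] beta_one assms
  by (simp add: common_nbrs_eq_card_nbrs_Int)

lemma mate_mate:
  assumes "v \<in> V"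
  shows "mate (mate v) = v"
  using mate_eqI[OF mate_in_V[OF assms] assms] mate_neq[OF assms] card_nbrs_Int_mate[OF assms]
  by (metis Int_commute)

lemma card_nbrs_Int_eq_a:
  assumes "v \<in> V" "u \<in> V" "u \<noteq> v" "u \<noteq> mate v"
  shows "card (N v \<inter> N u) = a"
proof -
  have "card (N v \<inter> N u) \<noteq> k - 1"
    using mate_eqI assms by blast
  then show ?thesis
    using common_nbrs_a_or_b[OF assms(2,1,3)]
    by (metis common_nbrs_eq_card_nbrs_Int Int_commute)
qed

lemma nbrs_Diff_nbrs_mate:
  assumes "v \<in> V"
  shows "N v - N (mate v) = {primed v}"
proof -
  have "card (N v - N (mate v)) = 1"
    using card_Diff_subset_Int[of "N v" "N (mate v)"] finite_nbrs k_gt_1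
      card_nbrs[OF assms] card_nbrs_Int_mate[OF assms] by simp
  then obtain u where u: "N v - N (mate v) = {u}"
    by (metis card_1_singletonE)
  then have "primed v = u"
    using vprime_eqI edge_sym by metis
  with u show ?thesis by simp
qed

lemma
  assumes "x \<in> V"
  shows adj_primed: "E x (primed x)"
    and not_adj_mate_primed: "\<not> E (mate x) (primed x)"
  using nbrs_Diff_nbrs_mate[OF assms] by (auto simp: mem_nbrs_iff)

lemma adj_primed_iff_adj_primed_mate:
  assumes "x \<in> V" "v \<in> V" "v \<noteq> x" "v \<noteq> mate x"
  shows "E v (primed x) \<longleftrightarrow> E v (primed (mate x))"
proof -
  define y where "y = mate x"
  define C where "C = N x \<inter> N y"
  have y: "y \<in> V" "mate y = x"
    using mate_in_V[OF assms(1)] mate_mate[OF assms(1)] unfolding y_def by auto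
  have Nx: "N x = insert (primed x) C" "primed x \<notin> C"
    using nbrs_Diff_nbrs_mate[OF assms(1)] unfolding C_def y_def by auto
  have Ny: "N y = insert (primed y) C" "primed y \<notin> C"
    using nbrs_Diff_nbrs_mate[OF y(1)] unfolding C_def y(2) by auto
  have "finite C"
    unfolding C_def using finite_nbrs by simp
  have "card (C \<inter> N v) + (if primed x \<in> N v then 1 else 0) = a"
    using card_nbrs_Int_eq_a[OF assms(1,2,3,4)] card_insert_Int_if[OF \<open>finite C\<close> Nx(2)]
    unfolding Nx(1) by simp
  moreover have "card (C \<inter> N v) + (if primed y \<in> N v then 1 else 0) = a"
    using card_nbrs_Int_eq_a[OF y(1) assms(2)] card_insert_Int_if[OF \<open>finite C\<close> Ny(2)]
      assms(3,4) y(2) unfolding Ny(1) by (simp add: y_def)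
  ultimately have "primed x \<in> N v \<longleftrightarrow> primed y \<in> N v"
    by (auto split: if_splits)
  then show ?thesis
    by (simp add: mem_nbrs_iff y_def)
qed

lemma nbrs_primed_Int_nbrs_primed_mate:
  assumes "x \<in> V"
  shows "N (primed x) \<inter> N (primed (mate x)) = N (primed x) - {x}"
proof (intro equalityI subsetI)
  fix w
  assume "w \<in> N (primed x) \<inter> N (primed (mate x))"
  then show "w \<in> N (primed x) - {x}"
    using not_adj_mate_primed[OF mate_in_V[OF assms]] mate_mate[OF assms] edge_sym
    by (auto simp: mem_nbrs_iff)
next
  fix w
  assume "w \<in> N (primed x) - {x}"
  then have w: "E (primed x) w" "w \<noteq> x"
    by (simp_all add: mem_nbrs_iff)
  then have "w \<in> V" "w \<noteq> mate x"
    using edge_in_V edge_sym not_adj_mate_primed[OF assms] by blast+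
  then have "E w (primed (mate x))"
    using adj_primed_iff_adj_primed_mate[OF assms _ w(2)] w(1) edge_sym by blast
  then show "w \<in> N (primed x) \<inter> N (primed (mate x))"
    using w(1) edge_sym by (simp add: mem_nbrs_iff)
qed

lemma mate_primed:
  assumes "x \<in> V"
  shows "mate (primed x) = primed (mate x)"
proof (rule mate_eqI)
  show "primed x \<in> V" "primed (mate x) \<in> V"
    using adj_primed[OF assms] adj_primed[OF mate_in_V[OF assms]] edge_in_V by blast+
  show "primed (mate x) \<noteq> primed x"
    using adj_primed[OF assms] not_adj_mate_primed[OF mate_in_V[OF assms]] mate_mate[OF assms]
    by auto
  have "x \<in> N (primed x)"
    using adj_primed[OF assms] edge_sym by (simp add: mem_nbrs_iff)
  then show "card (N (primed x) \<inter> N (primed (mate x))) = k - 1"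
    unfolding nbrs_primed_Int_nbrs_primed_mate[OF assms]
    using card_nbrs[OF \<open>primed x \<in> V\<close>] finite_nbrs by simp
qed

end

theorem lemma10:
  fixes V :: "'a set" and E :: "'a \<Rightarrow> 'a \<Rightarrow> bool" and n k a :: nat and x :: 'a
  assumes "deza_graph V E n k (k - 1) a"
    and "k > 1"
    and "\<forall>v\<in>V. beta_num V E (k - 1) v = 1"
    and "NA_vertex V E (k - 1) x"
  shows "\<not> E (vb V E (k - 1) (vprime V E (k - 1) x)) x"
proof -
  interpret deza_beta_one V E n k a
    using assms(1-3) by unfold_locales
  have x: "x \<in> V"
    using assms(4) unfolding NA_vertex_def by simp
  have "\<not> E x (primed (mate x))"
    using not_adj_mate_primed[OF mate_in_V[OF x]] mate_mate[OF x] by simp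
  then show ?thesis
    using mate_primed[OF x] edge_sym by metis
qed

end
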